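(* For $a>0$, $S>0$, $\sigma=e^{-aS}$, the scaling function $\mathcal F(S,a,\lambda)$ (defined in the context) satisfies $$\mathcal F(S,a,0)=\frac{2a^3\sigma^2(1+\sigma^2)}{(1-\sigma^2)^3},\qquad \frac{\partial}{\partial\lambda}\mathcal F(S,a,\lambda)\Big|_{\lambda=0}=-\frac{a\,\sigma^2(385-189\sigma+154\sigma^2+54\sigma^3-11\sigma^4-9\sigma^5)}{70(1-\sigma)(1+\sigma)^4}.$$
   Context: For $a>0$, $\lambda\ge0$, let $A=\sqrt{1+3\lambda/a^2}$, $\sigma=e^{-aS}$, $W(\sigma,A)=4A^3(1-\sigma)^3+12A^2(1-\sigma)^2(1+\sigma)+A(1-\sigma)(11+38\sigma+11\sigma^2)+3(1+\sigma)(1+8\sigma+\sigma^2)$, $U(\sigma,A)=2A^2(1-\sigma)^2+5A(1-\sigma)(1+\sigma)+3(1+3\sigma+\sigma^2)$, $Y(S,a,\lambda)=a\bigl(-3A-36\,\sigma U/((1-\sigma)W)\bigr)$. Let $H(S,a,\lambda)$ be the unique solution on $S\in(0,\infty)$ of $6\partial_S H+4YH+(\partial_S Y)^2=0$ with $H\to0$ as $S\to\infty$, and $\mathcal F(S,a,\lambda)=H(S,a,\lambda)/3$. *)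

theory Defs
  imports "HOL-Analysis.Analysis"
begin

definition Acoef :: "real \<Rightarrow> real \<Rightarrow> real" where
  "Acoef a lam = sqrt (1 + 3 * lam / a^2)"

definition Wfun :: "real \<Rightarrow> real \<Rightarrow> real" where
  "Wfun \<sigma> A = 4 * A^3 * (1 - \<sigma>)^3 + 12 * A^2 * (1 - \<sigma>)^2 * (1 + \<sigma>)
     + A * (1 - \<sigma>) * (11 + 38 * \<sigma> + 11 * \<sigma>^2) + 3 * (1 + \<sigma>) * (1 + 8 * \<sigma> + \<sigma>^2)"

definition Ufun :: "real \<Rightarrow> real \<Rightarrow> real" where
  "Ufun \<sigma> A = 2 * A^2 * (1 - \<sigma>)^2 + 5 * A * (1 - \<sigma>) * (1 + \<sigma>) + 3 * (1 + 3 * \<sigma> + \<sigma>^2)"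

definition Yfun :: "real \<Rightarrow> real \<Rightarrow> real \<Rightarrow> real" where
  "Yfun S a lam = (let A = Acoef a lam; \<sigma> = exp (- a * S) in
     a * (- 3 * A - 36 * \<sigma> * Ufun \<sigma> A / ((1 - \<sigma>) * Wfun \<sigma> A)))"

definition Hsol :: "real \<Rightarrow> real \<Rightarrow> (real \<Rightarrow> real) \<Rightarrow> bool" where
  "Hsol a lam h \<longleftrightarrow>
     (\<forall>S>0. \<exists>d. (h has_real_derivative d) (at S) \<and>
        6 * d + 4 * Yfun S a lam * h S + (deriv (\<lambda>s. Yfun s a lam) S)^2 = 0)
     \<and> (h \<longlongrightarrow> 0) at_top"

definition Hfun :: "real \<Rightarrow> real \<Rightarrow> real \<Rightarrow> real" where
  "Hfun S a lam = (THE y. \<exists>h. Hsol a lam h \<and> h S = y)"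

definition Ffun :: "real \<Rightarrow> real \<Rightarrow> real \<Rightarrow> real" where
  "Ffun S a lam = Hfun S a lam / 3"

end

theory Submission
  imports Defs
begin

text \<open>
  Write \<open>\<sigma> = exp (-a t)\<close>. Then \<open>Y = a y(\<sigma>, A)\<close> with \<open>y\<close> rational in \<open>\<sigma>\<close> and \<open>A\<close>, and
  \<open>y \<le> -3\<close> for \<open>A \<ge> 1\<close>, i.e. for \<open>\<lambda> \<ge> 0\<close>. So the linear equation \<open>6 H' + 4 Y H = -(Y')\<^sup>2\<close>
  has a strongly damping coefficient: by a maximum principle on \<open>[S, \<infinity>)\<close>, a solution
  vanishing at infinity is bounded by the supremum of its forcing term divided by \<open>12 a\<close>.
  This gives uniqueness, and existence follows from the integrating factor \<open>exp (2/3 \<integral> Y)\<close>.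

  At \<open>A = 1\<close> everything is rational in \<open>\<sigma>\<close> and \<open>H\<^sub>0 = a\<^sup>3 6\<sigma>\<^sup>2(1 + \<sigma>\<^sup>2)/(1 - \<sigma>\<^sup>2)\<^sup>3\<close> solves the
  equation explicitly. Writing \<open>y(\<sigma>, A) = y(\<sigma>, 1) + (A - 1) q(\<sigma>, A)\<close>, the first order
  correction \<open>H\<^sub>1 = a\<^sup>3 \<kappa>(\<sigma>)\<close> solves the linearised equation, and the maximum principle applied
  to \<open>(H\<^sub>A - H\<^sub>0)/(A - 1) - H\<^sub>1\<close> shows that this remainder tends to \<open>0\<close> as \<open>A \<rightarrow> 1\<close>, because its
  forcing term does so uniformly for \<open>\<sigma> \<in> [0, exp (-a S)]\<close>. Since \<open>dA/d\<lambda> = 3/(2a\<^sup>2)\<close> at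
  \<open>\<lambda> = 0\<close>, the \<open>\<lambda>\<close>-derivative of \<open>H\<close> at \<open>0\<close> is \<open>3 H\<^sub>1/(2a\<^sup>2)\<close>.
\<close>

section \<open>The coefficient \<open>Y\<close> as a rational function of \<open>\<sigma>\<close>\<close>

definition dWfun :: "real \<Rightarrow> real \<Rightarrow> real" where
  "dWfun s A = (27 + 27*A - 12*A^2 - 12*A^3) + (54 - 54*A - 24*A^2 + 24*A^3) * s
     + (9 - 33*A + 36*A^2 - 12*A^3) * s^2"

definition ddWfun :: "real \<Rightarrow> real \<Rightarrow> real" where
  "ddWfun s A = (54 - 54*A - 24*A^2 + 24*A^3) + 2*(9 - 33*A + 36*A^2 - 12*A^3) * s"

text \<open>\<open>Y = a ysig \<sigma> A\<close> (see \<open>ysig_eq\<close>); this way of writing it, rather than the one in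
  \<open>Yfun\<close>, makes the derivative in \<open>\<sigma>\<close> easy to write down.\<close>
definition ysig :: "real \<Rightarrow> real \<Rightarrow> real" where
  "ysig s A = -3*A - 9 * s / (1-s) - 3 * s * dWfun s A / Wfun s A"

definition ysig' :: "real \<Rightarrow> real \<Rightarrow> real" where
  "ysig' s A = -9/(1-s)^2 - 3*(dWfun s A / Wfun s A)
      - 3 * s * (ddWfun s A * Wfun s A - (dWfun s A)^2)/(Wfun s A)^2"

lemma Wfun_has_derivative: "((\<lambda>s. Wfun s A) has_real_derivative dWfun s A) (at s)"
  unfolding Wfun_def dWfun_def
  by (auto intro!: derivative_eq_intros simp: algebra_simps power2_eq_square power3_eq_cube)

lemma dWfun_has_derivative: "((\<lambda>s. dWfun s A) has_real_derivative ddWfun s A) (at s)"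
  unfolding ddWfun_def dWfun_def
  by (auto intro!: derivative_eq_intros simp: algebra_simps power2_eq_square power3_eq_cube)

lemma Wfun_pos:
  assumes "0 \<le> s" "s \<le> 1" "A \<ge> 1"
  shows "Wfun s A > 0"
proof -
  have "3 * (1 + s) * (1 + 8 * s + s^2) \<ge> 3 * 1 * 1"
    using assms by (intro mult_mono) auto
  moreover have "4 * A^3 * (1 - s)^3 \<ge> 0" "12 * A^2 * (1 - s)^2 * (1 + s) \<ge> 0"
    "A * (1 - s) * (11 + 38 * s + 11 * s^2) \<ge> 0"
    using assms by simp_all
  ultimately show ?thesis
    unfolding Wfun_def by linarith
qed

lemma Ufun_pos:
  assumes "0 \<le> s" "s \<le> 1" "A \<ge> 1"
  shows "Ufun s A > 0"
proof -
  have "2 * A^2 * (1 - s)^2 \<ge> 0" "5 * A * (1 - s) * (1 + s) \<ge> 0" "3 * (1 + 3 * s + s^2) \<ge> 3"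
    using assms by simp_all
  then show ?thesis
    unfolding Ufun_def by linarith
qed

lemma Ufun_eq_Wfun: "36 * Ufun s A = 9 * Wfun s A + 3 * (1 - s) * dWfun s A"
  unfolding Ufun_def Wfun_def dWfun_def
  by (simp add: algebra_simps power2_eq_square power3_eq_cube)

lemma ysig_eq:
  assumes "0 \<le> s" "s < 1" "A \<ge> 1"
  shows "ysig s A = -3*A - 36 * s * Ufun s A / ((1 - s) * Wfun s A)"
proof -
  have U: "Ufun s A = (9 * Wfun s A + 3 * (1 - s) * dWfun s A) / 36"
    using Ufun_eq_Wfun[of s A] by simp
  have "Wfun s A > 0" "1 - s \<noteq> 0"
    using Wfun_pos assms by auto
  then show ?thesis
    unfolding ysig_def U by (simp add: field_simps)
qed

lemma ysig_le:
  assumes "0 \<le> s" "s < 1" "A \<ge> 1"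
  shows "ysig s A \<le> -3"
proof -
  have "36 * s * Ufun s A / ((1 - s) * Wfun s A) \<ge> 0"
    using Wfun_pos[of s A] Ufun_pos[of s A] assms by simp
  then show ?thesis
    unfolding ysig_eq[OF assms] using assms(3) by linarith
qed

lemma ysig_has_derivative:
  assumes "s \<noteq> 1" "Wfun s A \<noteq> 0"
  shows "((\<lambda>s. ysig s A) has_real_derivative ysig' s A) (at s)"
proof -
  have "((\<lambda>s. s / (1-s)) has_real_derivative 1/(1-s)^2) (at s)"
    using assms by (auto intro!: derivative_eq_intros simp: field_simps power2_eq_square)
  moreover have "((\<lambda>s. s * dWfun s A / Wfun s A) has_real_derivative
     dWfun s A / Wfun s A + s * (ddWfun s A * Wfun s A - (dWfun s A)^2) / (Wfun s A)^2) (at s)"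
    using assms
    by (auto intro!: derivative_eq_intros Wfun_has_derivative dWfun_has_derivative
             simp: field_simps power2_eq_square)
  ultimately have "((\<lambda>s. -3*A - 9*(s / (1-s)) - 3*(s * dWfun s A / Wfun s A)) has_real_derivative
     0 - 9*(1/(1-s)^2) - 3*(dWfun s A / Wfun s A
       + s * (ddWfun s A * Wfun s A - (dWfun s A)^2) / (Wfun s A)^2)) (at s)"
    by (intro DERIV_diff DERIV_cmult DERIV_const)
  then show ?thesis
    unfolding ysig_def ysig'_def by (simp add: algebra_simps)
qed

lemma ysig'_isCont:
  assumes "0 \<le> s" "s < 1" "A \<ge> 1"
  shows "isCont (\<lambda>s. ysig' s A) s"
proof -
  have "Wfun s A > 0"
    using Wfun_pos assms by auto
  moreover have "isCont (\<lambda>s. Wfun s A) s" "isCont (\<lambda>s. dWfun s A) s"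
    using DERIV_isCont Wfun_has_derivative dWfun_has_derivative by blast+
  moreover have "isCont (\<lambda>s. ddWfun s A) s"
    unfolding ddWfun_def by (intro continuous_intros)
  ultimately show ?thesis
    unfolding ysig'_def using assms by (intro continuous_intros) auto
qed

definition Nfun :: "real \<Rightarrow> real \<Rightarrow> real" where
  "Nfun s A = 12 + 20*A + 8*A^2 + 27 * s - 12 * s * A^2 + 18 * s^2 - 12 * s^2 * A + 3 * s^3 - 8 * s^3 * A
     + 4 * s^3 * A^2"

definition Nfun' :: "real \<Rightarrow> real \<Rightarrow> real" where
  "Nfun' s A = 27 - 12*A^2 + 36 * s - 24 * s * A + 9 * s^2 - 24 * s^2 * A + 12 * s^2 * A^2"

definition qsig :: "real \<Rightarrow> real \<Rightarrow> real" where
  "qsig s A = -3 + 6 * s * Nfun s A/((1+s) * Wfun s A)"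

definition qsig' :: "real \<Rightarrow> real \<Rightarrow> real" where
  "qsig' s A = 6*((Nfun s A + s * Nfun' s A) * ((1+s) * Wfun s A)
      - s * Nfun s A * (Wfun s A + (1+s) * dWfun s A)) / ((1+s) * Wfun s A)^2"

lemma Nfun_has_derivative: "((\<lambda>s. Nfun s A) has_real_derivative Nfun' s A) (at s)"
  unfolding Nfun_def Nfun'_def
  by (auto intro!: derivative_eq_intros simp: algebra_simps power2_eq_square)

lemma Wfun_1: "Wfun s 1 = 30 * (1 + s)"
  unfolding Wfun_def by (simp add: algebra_simps power2_eq_square power3_eq_cube)

lemma dWfun_1: "dWfun s 1 = 30"
  unfolding dWfun_def by simp

lemma ddWfun_1: "ddWfun s 1 = 0"
  unfolding ddWfun_def by simp

lemma Nfun_1: "Nfun s 1 = 40 + 15 * s + 6 * s^2 - s^3"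
  unfolding Nfun_def by simp

lemma Nfun'_1: "Nfun' s 1 = 15 + 12 * s - 3 * s^2"
  unfolding Nfun'_def by simp

lemma dWfun_Wfun_cross: "dWfun s A * Wfun s 1 - dWfun s 1 * Wfun s A = -60 * (A - 1) * Nfun s A"
  unfolding Wfun_1 dWfun_1 unfolding dWfun_def Wfun_def Nfun_def
  by (simp add: algebra_simps power2_eq_square power3_eq_cube)

lemma unit_interval_factors_pos:
  fixes s :: real
  assumes "0 \<le> s" "s < 1"
  shows "1 - s > 0" "1 + s > 0" "1 - s^2 > 0"
proof -
  have "s * s \<le> s"
    using mult_left_le[of s s] assms by simp
  then show "1 - s > 0" "1 + s > 0" "1 - s^2 > 0"
    using assms by (auto simp: power2_eq_square)
qed

lemma ysig_split:
  assumes "0 \<le> s" "s < 1" "A \<ge> 1"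
  shows "ysig s A = ysig s 1 + (A - 1) * qsig s A"
proof -
  have W: "Wfun s A > 0" "Wfun s 1 > 0"
    using Wfun_pos assms by auto
  have "ysig s A - ysig s 1 = -3*(A-1) - 3 * s * (dWfun s A / Wfun s A - dWfun s 1 / Wfun s 1)"
    unfolding ysig_def by (simp add: algebra_simps diff_divide_distrib)
  also have "dWfun s A / Wfun s A - dWfun s 1 / Wfun s 1
      = (dWfun s A * Wfun s 1 - dWfun s 1 * Wfun s A) / (Wfun s A * Wfun s 1)"
    using W by (simp add: field_simps)
  also have "\<dots> = -60 * (A - 1) * Nfun s A / (Wfun s A * (30 * (1 + s)))"
    using dWfun_Wfun_cross[of s A] by (simp add: Wfun_1)
  finally have "ysig s A - ysig s 1
      = -3*(A-1) - 3 * s * (-60 * (A - 1) * Nfun s A / (Wfun s A * (30 * (1 + s))))" .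
  also have "\<dots> = (A - 1) * qsig s A"
    unfolding qsig_def using W unit_interval_factors_pos[OF assms(1,2)]
    by (simp add: divide_simps) (simp add: algebra_simps)
  finally show ?thesis
    by simp
qed

lemma qsig_has_derivative:
  assumes "1 + s \<noteq> 0" "Wfun s A \<noteq> 0"
  shows "((\<lambda>s. qsig s A) has_real_derivative qsig' s A) (at s)"
proof -
  have "((\<lambda>s. -3 + 6*(s * Nfun s A/((1+s) * Wfun s A))) has_real_derivative 0 + 6 *
     (((1 * Nfun s A + Nfun' s A * s) * ((1+s) * Wfun s A)
        - s * Nfun s A * ((0+1) * Wfun s A + dWfun s A * (1+s)))
      / (((1+s) * Wfun s A) * ((1+s) * Wfun s A)))) (at s)"
    using assms
    by (intro DERIV_add DERIV_cmult DERIV_const DERIV_divide DERIV_mult DERIV_ident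
          Nfun_has_derivative Wfun_has_derivative) simp
  moreover have "(\<lambda>s. qsig s A) = (\<lambda>s. -3 + 6*(s * Nfun s A/((1+s) * Wfun s A)))"
    unfolding qsig_def by (simp add: mult.assoc)
  ultimately show ?thesis
    by (simp add: qsig'_def power2_eq_square algebra_simps)
qed

lemma ysig'_split:
  assumes "0 < s" "s < 1" "A \<ge> 1"
  shows "ysig' s A = ysig' s 1 + (A - 1) * qsig' s A"
proof -
  have W: "Wfun s A > 0" "Wfun s 1 > 0"
    using Wfun_pos assms by auto
  have "((\<lambda>x. ysig x 1 + (A - 1) * qsig x A) has_real_derivative ysig' s 1 + (A - 1) * qsig' s A) (at s)"
    using W assms by (intro DERIV_add DERIV_cmult ysig_has_derivative qsig_has_derivative) auto
  then have "((\<lambda>x. ysig x A) has_real_derivative ysig' s 1 + (A - 1) * qsig' s A) (at s)"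
    by (rule has_field_derivative_transform_within_open[where S="{0<..<1}"])
       (use assms ysig_split[symmetric] in auto)
  moreover have "((\<lambda>x. ysig x A) has_real_derivative ysig' s A) (at s)"
    using W assms by (intro ysig_has_derivative) auto
  ultimately show ?thesis
    using DERIV_unique by blast
qed

lemma ysig_1:
  assumes "0 \<le> s" "s < 1"
  shows "ysig s 1 = -3 * (1 + 4 * s + s^2) / (1 - s^2)"
  using unit_interval_factors_pos[OF assms] unfolding ysig_def Wfun_1 dWfun_1
  by (simp add: divide_simps) (simp add: algebra_simps power2_eq_square)

lemma ysig'_1:
  assumes "0 \<le> s" "s < 1"
  shows "ysig' s 1 = -12 * (1 + s + s^2) / (1 - s^2)^2"
  using unit_interval_factors_pos[OF assms] unfolding ysig'_def Wfun_1 dWfun_1 ddWfun_1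
  by (simp add: divide_simps) (simp add: algebra_simps power2_eq_square)

lemma qsig_1:
  assumes "0 \<le> s" "s < 1"
  shows "qsig s 1 = (-15 + 10 * s + 6 * s^3 - s^4) / (5 * (1 + s)^2)"
  using unit_interval_factors_pos[OF assms] unfolding qsig_def Wfun_1 Nfun_1
  by (simp add: divide_simps) algebra

lemma qsig'_1:
  assumes "0 \<le> s" "s < 1"
  shows "qsig' s 1 = (40 - 10 * s + 18 * s^2 + 2 * s^3 - 2 * s^4) / (5 * (1 + s)^3)"
  using unit_interval_factors_pos[OF assms] unfolding qsig'_def Wfun_1 dWfun_1 Nfun_1 Nfun'_1
  by (simp add: divide_simps) algebra

section \<open>The explicit solution at \<open>A = 1\<close> and its first order correction\<close>

definition h0sig :: "real \<Rightarrow> real" where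
  "h0sig s = 6 * s^2 * (1 + s^2) / (1 - s^2)^3"

definition h0sig' :: "real \<Rightarrow> real" where
  "h0sig' s = 12 * s * (1 + 4 * s^2 + s^4) / (1 - s^2)^4"

definition h1sig :: "real \<Rightarrow> real" where
  "h1sig s = -(s^2 * (385 - 189 * s + 154 * s^2 + 54 * s^3 - 11 * s^4 - 9 * s^5)) / (35 * (1 - s) * (1 + s)^4)"

definition h1sig' :: "real \<Rightarrow> real" where
  "h1sig' s = 2 * s * (-385 + 861 * s - 1169 * s^2 + 285 * s^3 + 37 * s^4 + 15 * s^5 - 19 * s^6 - 9 * s^7)
     / (35 * (1 - s)^2 * (1 + s)^5)"

lemma h0sig_has_derivative:
  assumes "0 \<le> s" "s < 1"
  shows "(h0sig has_real_derivative h0sig' s) (at s)"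
proof -
  note s = unit_interval_factors_pos[OF assms]
  have f: "((\<lambda>s. 6 * s^2 * (1 + s^2)) has_real_derivative 12 * s + 24 * s^3) (at s)"
    by (auto intro!: derivative_eq_intros simp: algebra_simps power2_eq_square power3_eq_cube)
  have g: "((\<lambda>s. (1 - s^2)^3) has_real_derivative -6 * s * (1 - s^2)^2) (at s)"
    by (auto intro!: derivative_eq_intros simp: algebra_simps power2_eq_square power3_eq_cube)
  have "(h0sig has_real_derivative
     ((12 * s + 24 * s^3) * (1 - s^2)^3 - 6 * s^2 * (1 + s^2) * (-6 * s * (1 - s^2)^2))
       / ((1 - s^2)^3 * (1 - s^2)^3)) (at s)"
    unfolding h0sig_def using DERIV_divide[OF f g] s by simp
  moreover have "((12 * s + 24 * s^3) * (1 - s^2)^3 - 6 * s^2 * (1 + s^2) * (-6 * s * (1 - s^2)^2))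
       / ((1 - s^2)^3 * (1 - s^2)^3) = h0sig' s"
    unfolding h0sig'_def using s by (simp add: divide_simps) algebra
  ultimately show ?thesis
    by (simp only:)
qed

lemma h1sig_has_derivative:
  assumes "0 \<le> s" "s < 1"
  shows "(h1sig has_real_derivative h1sig' s) (at s)"
proof -
  note s = unit_interval_factors_pos[OF assms]
  have f: "((\<lambda>s. -(s^2 * (385 - 189 * s + 154 * s^2 + 54 * s^3 - 11 * s^4 - 9 * s^5))) has_real_derivative
     -(770 * s - 567 * s^2 + 616 * s^3 + 270 * s^4 - 66 * s^5 - 63 * s^6)) (at s)"
    by (auto intro!: derivative_eq_intros
        simp: algebra_simps power2_eq_square power3_eq_cube eval_nat_numeral)
  have g: "((\<lambda>s. 35 * (1 - s) * (1 + s)^4) has_real_derivative 35 * (1 + s)^3 * (3 - 5 * s)) (at s)"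
    by (auto intro!: derivative_eq_intros
        simp: algebra_simps power2_eq_square power3_eq_cube eval_nat_numeral)
  have "(h1sig has_real_derivative
     (-(770 * s - 567 * s^2 + 616 * s^3 + 270 * s^4 - 66 * s^5 - 63 * s^6) * (35 * (1 - s) * (1 + s)^4)
      + s^2 * (385 - 189 * s + 154 * s^2 + 54 * s^3 - 11 * s^4 - 9 * s^5) * (35 * (1 + s)^3 * (3 - 5 * s)))
      / ((35 * (1 - s) * (1 + s)^4) * (35 * (1 - s) * (1 + s)^4))) (at s)"
    unfolding h1sig_def using DERIV_divide[OF f g] s by simp
  moreover have "(-(770 * s - 567 * s^2 + 616 * s^3 + 270 * s^4 - 66 * s^5 - 63 * s^6) * (35 * (1 - s) * (1 + s)^4)
      + s^2 * (385 - 189 * s + 154 * s^2 + 54 * s^3 - 11 * s^4 - 9 * s^5) * (35 * (1 + s)^3 * (3 - 5 * s)))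
      / ((35 * (1 - s) * (1 + s)^4) * (35 * (1 - s) * (1 + s)^4)) = h1sig' s"
    unfolding h1sig'_def using s by (simp add: divide_simps) algebra
  ultimately show ?thesis
    by (simp only:)
qed

text \<open>The equation \<open>6 H' + 4 Y H + (Y')\<^sup>2 = 0\<close> at \<open>A = 1\<close>, after the substitution \<open>\<sigma> = exp (-a t)\<close>
  and division by \<open>a\<^sup>4\<close>.\<close>
lemma h0sig_ode:
  assumes "0 \<le> s" "s < 1"
  shows "-6 * s * h0sig' s + 4 * ysig s 1 * h0sig s + s^2 * (ysig' s 1)^2 = 0"
  unfolding h0sig'_def h0sig_def ysig_1[OF assms] ysig'_1[OF assms]
  using unit_interval_factors_pos[OF assms] by (simp add: divide_simps) algebra

text \<open>The coefficient of \<open>A - 1\<close> in the same equation.\<close>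
lemma h1sig_ode:
  assumes "0 \<le> s" "s < 1"
  shows "-6 * s * h1sig' s + 4 * ysig s 1 * h1sig s + 4 * qsig s 1 * h0sig s
     + 2 * s^2 * ysig' s 1 * qsig' s 1 = 0"
  unfolding h1sig'_def h1sig_def h0sig_def ysig_1[OF assms] ysig'_1[OF assms] qsig_1[OF assms]
    qsig'_1[OF assms]
  using unit_interval_factors_pos[OF assms] by (simp add: divide_simps) algebra

section \<open>A maximum principle\<close>

text \<open>At an interior maximum \<open>p\<close> of \<open>r\<close> on \<open>[S, T]\<close> with \<open>r p > M/(4c)\<close> the equation would
  force \<open>r' p > 0\<close>; the decay of \<open>r\<close> at infinity supplies such a \<open>T\<close>.\<close>
lemma max_principle_upper:
  fixes r r' Y f :: "real \<Rightarrow> real"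
  assumes c: "c > 0"
    and der: "\<And>t. t \<ge> S \<Longrightarrow> (r has_real_derivative r' t) (at t)"
    and eq: "\<And>t. t \<ge> S \<Longrightarrow> 6 * r' t + 4 * Y t * r t = - f t"
    and Y_le: "\<And>t. t \<ge> S \<Longrightarrow> Y t \<le> -c"
    and f_le: "\<And>t. t \<ge> S \<Longrightarrow> \<bar>f t\<bar> \<le> M"
    and lim: "(r \<longlongrightarrow> 0) at_top"
  shows "r S \<le> M / (4 * c)"
proof (rule ccontr)
  assume "\<not> ?thesis"
  then have big: "r S > M / (4 * c)"
    by simp
  have "M \<ge> 0"
    using f_le[of S] by auto
  with big c have rS: "r S > 0"
    by (smt (verit) divide_nonneg_pos)
  obtain N where N: "\<And>t. t \<ge> N \<Longrightarrow> r t < r S"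
    using order_tendstoD(2)[OF lim rS] by (auto simp: eventually_at_top_linorder)
  define T where "T = max N S"
  have T: "T \<ge> S" "r T < r S"
    using N[of T] by (auto simp: T_def)
  have cont: "continuous_on {S..T} r"
    by (rule continuous_at_imp_continuous_on) (metis atLeastAtMost_iff der DERIV_isCont)
  obtain p where p: "p \<in> {S..T}" "\<And>y. y \<in> {S..T} \<Longrightarrow> r y \<le> r p"
    using continuous_attains_sup[OF compact_Icc _ cont] T by auto
  have rp: "r p \<ge> r S"
    using p T by auto
  with T p have pT: "S \<le> p" "p < T"
    by (metis atLeastAtMost_iff order_le_less not_le)+
  have "(-Y p) * r p \<ge> c * r p"
    using Y_le[OF pT(1)] rp rS by (intro mult_right_mono) auto
  moreover have "4 * c * r p > M"
  proof -
    have "r p > M / (4 * c)"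
      using rp big by linarith
    then show ?thesis
      using c by (simp add: pos_divide_less_eq mult.commute)
  qed
  ultimately have "r' p > 0"
    using eq[OF pT(1)] f_le[OF pT(1)] by linarith
  then obtain d where d: "d > 0" "\<And>h. h > 0 \<Longrightarrow> h < d \<Longrightarrow> r p < r (p + h)"
    using DERIV_pos_inc_right[OF der[OF pT(1)]] by blast
  define h where "h = min (d/2) (T - p)"
  have "h > 0" "h < d" "p + h \<in> {S..T}"
    using d pT by (auto simp: h_def)
  then show False
    using d(2) p(2) by fastforce
qed

lemma max_principle:
  fixes r r' Y f :: "real \<Rightarrow> real"
  assumes c: "c > 0"
    and der: "\<And>t. t \<ge> S \<Longrightarrow> (r has_real_derivative r' t) (at t)"
    and eq: "\<And>t. t \<ge> S \<Longrightarrow> 6 * r' t + 4 * Y t * r t = - f t"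
    and Y_le: "\<And>t. t \<ge> S \<Longrightarrow> Y t \<le> -c"
    and f_le: "\<And>t. t \<ge> S \<Longrightarrow> \<bar>f t\<bar> \<le> M"
    and lim: "(r \<longlongrightarrow> 0) at_top"
  shows "\<bar>r S\<bar> \<le> M / (4 * c)"
proof -
  have "- r S \<le> M / (4 * c)"
  proof (rule max_principle_upper[where r="\<lambda>t. - r t" and r'="\<lambda>t. - r' t" and f="\<lambda>t. - f t"])
    show "((\<lambda>t. - r t) has_real_derivative - r' t) (at t)" if "t \<ge> S" for t
      using der[OF that] by (rule DERIV_minus)
    show "6 * (- r' t) + 4 * Y t * (- r t) = - (- f t)" if "t \<ge> S" for t
      using eq[OF that] by simp
    show "((\<lambda>t. - r t) \<longlongrightarrow> 0) at_top"
      using tendsto_minus[OF lim] by simp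
  qed (use c Y_le f_le in auto)
  moreover have "r S \<le> M / (4 * c)"
    by (rule max_principle_upper[OF c der eq Y_le f_le lim])
  ultimately show ?thesis
    by simp
qed

section \<open>Existence and uniqueness of \<open>H\<close>\<close>

definition sig :: "real \<Rightarrow> real \<Rightarrow> real" where
  "sig a t = exp (- a * t)"

lemma sig_pos: "sig a t > 0"
  unfolding sig_def by simp

lemma sig_bounds:
  assumes "a > 0" "t > 0"
  shows "0 \<le> sig a t" "sig a t < 1"
  unfolding sig_def using assms by simp_all

lemma sig_has_derivative: "(sig a has_real_derivative - a * sig a t) (at t within X)"
  unfolding sig_def by (auto intro!: derivative_eq_intros)

lemma sig_tendsto_0:
  assumes "a > 0"
  shows "(sig a \<longlongrightarrow> 0) at_top"
proof -
  have "filterlim (\<lambda>x. - a * x) at_bot at_top"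
    by (rule filterlim_tendsto_neg_mult_at_bot[OF tendsto_const _ filterlim_ident]) (use assms in simp)
  from filterlim_compose[OF exp_at_bot this] show ?thesis
    unfolding sig_def by simp
qed

lemma sig_antimono:
  assumes "a > 0" "t \<le> u"
  shows "sig a u \<le> sig a t"
  unfolding sig_def using assms by (simp add: mult_left_mono)

text \<open>\<open>Yfun\<close> with \<open>Acoef a \<lambda>\<close> replaced by a free parameter \<open>A \<ge> 1\<close> (see \<open>Yfun_eq_Yt\<close>).\<close>
definition Yt :: "real \<Rightarrow> real \<Rightarrow> real \<Rightarrow> real" where
  "Yt a A t = a * ysig (sig a t) A"

definition Yt' :: "real \<Rightarrow> real \<Rightarrow> real \<Rightarrow> real" where
  "Yt' a A t = - (a^2 * sig a t * ysig' (sig a t) A)"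

lemma Yt_has_derivative:
  assumes "a > 0" "t > 0" "A \<ge> 1"
  shows "(Yt a A has_real_derivative Yt' a A t) (at t)"
proof -
  note s = sig_bounds[OF assms(1,2)]
  have "((\<lambda>s. ysig s A) has_real_derivative ysig' (sig a t) A) (at (sig a t))"
    using Wfun_pos[of "sig a t" A] s assms(3) by (intro ysig_has_derivative) auto
  from DERIV_cmult[OF DERIV_chain2[OF this sig_has_derivative], of a] show ?thesis
    unfolding Yt_def Yt'_def by (simp add: power2_eq_square algebra_simps)
qed

lemma Yt_le:
  assumes "a > 0" "t > 0" "A \<ge> 1"
  shows "Yt a A t \<le> -3 * a"
proof -
  have "a * ysig (sig a t) A \<le> a * (-3)"
    using ysig_le[OF sig_bounds[OF assms(1,2)] assms(3)] assms(1) by (intro mult_left_mono) auto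
  then show ?thesis
    unfolding Yt_def by simp
qed

lemma Yt'_isCont:
  assumes "a > 0" "t > 0" "A \<ge> 1"
  shows "isCont (Yt' a A) t"
proof -
  have sig_cont: "isCont (sig a) t"
    by (rule DERIV_isCont[OF sig_has_derivative])
  moreover have "isCont (\<lambda>t. ysig' (sig a t) A) t"
    by (rule isCont_o2[OF sig_cont ysig'_isCont[OF sig_bounds[OF assms(1,2)] assms(3)]])
  ultimately show ?thesis
    unfolding Yt'_def[abs_def] by (intro continuous_intros)
qed

lemma Yt'_square_bound:
  assumes a: "a > 0" and c: "c > 0" and A: "A \<ge> 1"
  shows "\<exists>K. \<forall>u\<ge>c. (Yt' a A u)^2 \<le> K * (sig a u)^2"
proof -
  have cont: "continuous_on {0..sig a c} (\<lambda>s. \<bar>ysig' s A\<bar>)"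
    using sig_bounds[OF a c] A
    by (intro continuous_at_imp_continuous_on ballI continuous_intros ysig'_isCont) auto
  obtain s0 where s0: "\<And>s. s \<in> {0..sig a c} \<Longrightarrow> \<bar>ysig' s A\<bar> \<le> \<bar>ysig' s0 A\<bar>"
    using continuous_attains_sup[OF compact_Icc _ cont] sig_pos[of a c] by fastforce
  have "(Yt' a A u)^2 \<le> a^4 * (ysig' s0 A)^2 * (sig a u)^2" if u: "u \<ge> c" for u
  proof -
    have "sig a u \<in> {0..sig a c}"
      using sig_antimono[OF a u] sig_pos[of a u] by auto
    then have "(ysig' (sig a u) A)^2 \<le> (ysig' s0 A)^2"
      using s0 by (metis abs_ge_zero power2_abs power_mono)
    then have "a^4 * (sig a u)^2 * (ysig' (sig a u) A)^2 \<le> a^4 * (sig a u)^2 * (ysig' s0 A)^2"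
      by (intro mult_left_mono) auto
    moreover have "(Yt' a A u)^2 = a^4 * (sig a u)^2 * (ysig' (sig a u) A)^2"
      unfolding Yt'_def by algebra
    ultimately show ?thesis
      by (simp add: algebra_simps)
  qed
  then show ?thesis
    by blast
qed

lemma Acoef_ge_1:
  assumes "a > 0" "lam \<ge> 0"
  shows "Acoef a lam \<ge> 1"
  unfolding Acoef_def using assms by simp

lemma Yfun_eq_Yt:
  assumes "a > 0" "t > 0" "lam \<ge> 0"
  shows "Yfun t a lam = Yt a (Acoef a lam) t"
  unfolding Yfun_def Yt_def Let_def sig_def[symmetric]
  using ysig_eq[OF sig_bounds[OF assms(1,2)] Acoef_ge_1[OF assms(1,3)]] by simp

lemma deriv_Yfun_eq_Yt':
  assumes "a > 0" "t > 0" "lam \<ge> 0"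
  shows "deriv (\<lambda>s. Yfun s a lam) t = Yt' a (Acoef a lam) t"
proof -
  have "((\<lambda>s. Yfun s a lam) has_real_derivative Yt' a (Acoef a lam) t) (at t)"
    by (rule has_field_derivative_transform_within_open[where S="{0<..}",
          OF Yt_has_derivative[OF assms(1,2) Acoef_ge_1[OF assms(1,3)]]])
       (use assms Yfun_eq_Yt in auto)
  then show ?thesis
    by (rule DERIV_imp_deriv)
qed

definition H_solution :: "real \<Rightarrow> real \<Rightarrow> (real \<Rightarrow> real) \<Rightarrow> bool" where
  "H_solution a A h \<longleftrightarrow>
     (\<forall>S>0. \<exists>d. (h has_real_derivative d) (at S) \<and> 6 * d + 4 * Yt a A S * h S + (Yt' a A S)^2 = 0)
     \<and> (h \<longlongrightarrow> 0) at_top"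

lemma Hsol_iff_H_solution:
  assumes "a > 0" "lam \<ge> 0"
  shows "Hsol a lam h \<longleftrightarrow> H_solution a (Acoef a lam) h"
  unfolding Hsol_def H_solution_def using assms by (simp add: Yfun_eq_Yt deriv_Yfun_eq_Yt')

lemma H_solution_derivative:
  assumes "H_solution a A h"
  obtains h' where "\<And>t. t > 0 \<Longrightarrow> (h has_real_derivative h' t) (at t)"
    and "\<And>t. t > 0 \<Longrightarrow> 6 * h' t + 4 * Yt a A t * h t + (Yt' a A t)^2 = 0"
proof -
  have "\<forall>t. \<exists>d. t > 0 \<longrightarrow> (h has_real_derivative d) (at t) \<and> 6 * d + 4 * Yt a A t * h t + (Yt' a A t)^2 = 0"
    using assms unfolding H_solution_def by blast
  then show ?thesis
    using that by metis
qed

lemma H_solution_unique: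
  assumes a: "a > 0" and A: "A \<ge> 1" and S: "S > 0"
    and h1: "H_solution a A h1" and h2: "H_solution a A h2"
  shows "h1 S = h2 S"
proof -
  obtain d1 where d1: "\<And>t. t > 0 \<Longrightarrow> (h1 has_real_derivative d1 t) (at t)"
    "\<And>t. t > 0 \<Longrightarrow> 6 * d1 t + 4 * Yt a A t * h1 t + (Yt' a A t)^2 = 0"
    using H_solution_derivative[OF h1] by blast
  obtain d2 where d2: "\<And>t. t > 0 \<Longrightarrow> (h2 has_real_derivative d2 t) (at t)"
    "\<And>t. t > 0 \<Longrightarrow> 6 * d2 t + 4 * Yt a A t * h2 t + (Yt' a A t)^2 = 0"
    using H_solution_derivative[OF h2] by blast
  have "\<bar>h1 S - h2 S\<bar> \<le> 0 / (4 * (3 * a))"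
  proof (rule max_principle[where r="\<lambda>t. h1 t - h2 t" and r'="\<lambda>t. d1 t - d2 t" and f="\<lambda>t. 0"])
    show "((\<lambda>t. h1 t - h2 t) has_real_derivative d1 t - d2 t) (at t)" if "S \<le> t" for t
      using d1(1) d2(1) that S by (intro DERIV_diff) auto
    show "6 * (d1 t - d2 t) + 4 * Yt a A t * (h1 t - h2 t) = - 0" if "S \<le> t" for t
      using d1(2)[of t] d2(2)[of t] that S by (simp add: algebra_simps)
    show "((\<lambda>t. h1 t - h2 t) \<longlongrightarrow> 0) at_top"
      using tendsto_diff[of h1 0 at_top h2 0] h1 h2 unfolding H_solution_def by simp
    show "Yt a A t \<le> - (3 * a)" if "S \<le> t" for t
      using Yt_le[OF a _ A, of t] that S by simp
  qed (use a in auto)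
  then show ?thesis
    by simp
qed

lemma Hfun_eq:
  assumes a: "a > 0" and lam: "lam \<ge> 0" and S: "S > 0" and h: "H_solution a (Acoef a lam) h"
  shows "Hfun S a lam = h S"
  unfolding Hfun_def
proof (rule the_equality)
  show "\<exists>h'. Hsol a lam h' \<and> h' S = h S"
    using h Hsol_iff_H_solution[OF a lam] by blast
  show "y = h S" if "\<exists>h'. Hsol a lam h' \<and> h' S = y" for y
    using that H_solution_unique[OF a Acoef_ge_1[OF a lam] S _ h] Hsol_iff_H_solution[OF a lam]
    by metis
qed

definition H0 :: "real \<Rightarrow> real \<Rightarrow> real" where
  "H0 a t = a^3 * h0sig (sig a t)"

definition H1 :: "real \<Rightarrow> real \<Rightarrow> real" where
  "H1 a t = a^3 * h1sig (sig a t)"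

lemma H0_has_derivative:
  assumes "a > 0" "t > 0"
  shows "(H0 a has_real_derivative a^3 * (h0sig' (sig a t) * (- a * sig a t))) (at t)"
  unfolding H0_def[abs_def]
  by (intro DERIV_cmult DERIV_chain2[OF h0sig_has_derivative[OF sig_bounds[OF assms]]
        sig_has_derivative])

lemma H1_has_derivative:
  assumes "a > 0" "t > 0"
  shows "(H1 a has_real_derivative a^3 * (h1sig' (sig a t) * (- a * sig a t))) (at t)"
  unfolding H1_def[abs_def]
  by (intro DERIV_cmult DERIV_chain2[OF h1sig_has_derivative[OF sig_bounds[OF assms]]
        sig_has_derivative])

lemma H0_ode:
  assumes "a > 0" "t > 0"
  shows "6 * (a^3 * (h0sig' (sig a t) * (- a * sig a t))) + 4 * Yt a 1 t * H0 a t
     + (Yt' a 1 t)^2 = 0"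
proof -
  define x where "x = sig a t"
  have "6 * (a^3 * (h0sig' x * (- a * x))) + 4 * (a * ysig x 1) * (a^3 * h0sig x)
      + (- (a^2 * x * ysig' x 1))^2
      = a^4 * (-6 * x * h0sig' x + 4 * ysig x 1 * h0sig x + x^2 * (ysig' x 1)^2)"
    by algebra
  also have "\<dots> = 0"
    using h0sig_ode[OF sig_bounds[OF assms, folded x_def]] by simp
  finally show ?thesis
    unfolding Yt_def Yt'_def H0_def x_def .
qed

lemma H1_ode:
  assumes "a > 0" "t > 0"
  shows "6 * (a^3 * (h1sig' (sig a t) * (- a * sig a t))) + 4 * Yt a 1 t * H1 a t
     + 4 * H0 a t * (a * qsig (sig a t) 1) + 2 * Yt' a 1 t * (- (a^2 * sig a t * qsig' (sig a t) 1))
     = 0"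
proof -
  define x where "x = sig a t"
  have "6 * (a^3 * (h1sig' x * (- a * x))) + 4 * (a * ysig x 1) * (a^3 * h1sig x)
      + 4 * (a^3 * h0sig x) * (a * qsig x 1) + 2 * (- (a^2 * x * ysig' x 1)) * (- (a^2 * x * qsig' x 1))
      = a^4 * (-6 * x * h1sig' x + 4 * ysig x 1 * h1sig x + 4 * qsig x 1 * h0sig x
          + 2 * x^2 * ysig' x 1 * qsig' x 1)"
    by algebra
  also have "\<dots> = 0"
    using h1sig_ode[OF sig_bounds[OF assms, folded x_def]] by simp
  finally show ?thesis
    unfolding Yt_def Yt'_def H0_def H1_def x_def .
qed

lemma H0_tendsto_0:
  assumes "a > 0"
  shows "(H0 a \<longlongrightarrow> 0) at_top"
proof -
  have "isCont h0sig 0"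
    unfolding h0sig_def[abs_def] by (intro continuous_intros) auto
  from tendsto_mult_left[OF isCont_tendsto_compose[OF this sig_tendsto_0[OF assms]]]
  show ?thesis
    unfolding H0_def[abs_def] h0sig_def by simp
qed

lemma H1_tendsto_0:
  assumes "a > 0"
  shows "(H1 a \<longlongrightarrow> 0) at_top"
proof -
  have "isCont h1sig 0"
    unfolding h1sig_def[abs_def] by (intro continuous_intros) auto
  from tendsto_mult_left[OF isCont_tendsto_compose[OF this sig_tendsto_0[OF assms]]]
  show ?thesis
    unfolding H1_def[abs_def] h1sig_def by simp
qed

lemma H_solution_H0:
  assumes "a > 0"
  shows "H_solution a 1 (H0 a)"
  unfolding H_solution_def using H0_has_derivative H0_ode H0_tendsto_0 assms by blast

lemma sig_square_has_integral:
  assumes "a > 0" "t \<le> T"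
  shows "((\<lambda>u. (sig a u)^2) has_integral ((sig a t)^2 - (sig a T)^2) / (2 * a)) {t..T}"
proof -
  have "((\<lambda>x. - ((sig a x)^2 / (2 * a))) has_real_derivative (sig a u)^2) (at u within {t..T})"
    for u :: real
    using assms(1)
    by (auto intro!: derivative_eq_intros sig_has_derivative simp: power2_eq_square field_simps)
  then have "((\<lambda>u. (sig a u)^2) has_integral
      (- ((sig a T)^2 / (2 * a)) - (- ((sig a t)^2 / (2 * a))))) {t..T}"
    using assms(2)
    by (intro fundamental_theorem_of_calculus)
       (auto simp: has_real_derivative_iff_has_vector_derivative[symmetric])
  then show ?thesis
    by (simp add: diff_divide_distrib)
qed

text \<open>The solution of \<open>6 h' + 4 Y h + (Y')\<^sup>2 = 0\<close> decaying at infinity is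
  \<open>h t = (6 \<psi> t)\<inverse> \<integral>\<^sub>t\<^sup>\<infinity> \<psi> (Y')\<^sup>2\<close> with the integrating factor \<open>\<psi>' = 2/3 Y \<psi>\<close>; the integral converges
  because \<open>\<psi>\<close> is decreasing and \<open>(Y')\<^sup>2 = O(exp (-2 a t))\<close>.\<close>
locale decaying_linear_ode =
  fixes a :: real and Y Yd psi :: "real \<Rightarrow> real"
  assumes a_pos: "a > 0"
    and psi_pos: "\<And>t. t > 0 \<Longrightarrow> psi t > 0"
    and psi_has_derivative: "\<And>t. t > 0 \<Longrightarrow> (psi has_real_derivative psi t * (2/3 * Y t)) (at t)"
    and psi_antimono: "\<And>t u. 0 < t \<Longrightarrow> t \<le> u \<Longrightarrow> psi u \<le> psi t"
    and Yd_isCont: "\<And>t. t > 0 \<Longrightarrow> isCont Yd t"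
    and Yd_square_bound: "\<And>c. c > 0 \<Longrightarrow> \<exists>K. \<forall>u\<ge>c. (Yd u)^2 \<le> K * (sig a u)^2"
begin

definition integrand :: "real \<Rightarrow> real" where
  "integrand t = psi t * (Yd t)^2"

definition partial_integral :: "real \<Rightarrow> real \<Rightarrow> real" where
  "partial_integral t T = integral {t..T} integrand"

definition tail_integral :: "real \<Rightarrow> real" where
  "tail_integral t = Lim at_top (partial_integral t)"

definition solution :: "real \<Rightarrow> real" where
  "solution t = tail_integral t / (6 * psi t)"

lemma integrand_nonneg: "t > 0 \<Longrightarrow> integrand t \<ge> 0"
  unfolding integrand_def using psi_pos[of t] by simp

lemma integrand_continuous_on: "0 < t \<Longrightarrow> continuous_on {t..T} integrand"
  unfolding integrand_def
  by (intro continuous_at_imp_continuous_on ballI continuous_intros Yd_isCont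
        DERIV_isCont[OF psi_has_derivative]) auto

lemma integrand_integrable: "0 < t \<Longrightarrow> integrand integrable_on {t..T}"
  by (rule integrable_continuous_interval[OF integrand_continuous_on])

lemma partial_integral_nonneg: "0 < t \<Longrightarrow> partial_integral t T \<ge> 0"
  unfolding partial_integral_def
  by (rule integral_nonneg[OF integrand_integrable]) (auto intro: integrand_nonneg)

lemma partial_integral_combine:
  "0 < c \<Longrightarrow> c \<le> t \<Longrightarrow> t \<le> T \<Longrightarrow> partial_integral c t + partial_integral t T = partial_integral c T"
  unfolding partial_integral_def
  by (rule Henstock_Kurzweil_Integration.integral_combine[OF _ _ integrand_integrable])

lemma partial_integral_le:
  assumes c: "0 < c" "c \<le> t" "t \<le> T" and K: "\<forall>u\<ge>c. (Yd u)^2 \<le> K * (sig a u)^2"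
  shows "partial_integral t T \<le> psi t * K * (sig a t)^2 / (2 * a)"
proof -
  have t: "t > 0"
    using c by simp
  have "K * (sig a c)^2 \<ge> 0"
    using K by (meson order.trans order_refl zero_le_power2)
  then have K0: "K \<ge> 0"
    using sig_pos[of a c] by (simp add: zero_le_mult_iff)
  have "integrand u \<le> psi t * K * (sig a u)^2" if "u \<in> {t..T}" for u
  proof -
    have "psi u \<le> psi t" "(Yd u)^2 \<le> K * (sig a u)^2"
      using psi_antimono[OF t] K c that by auto
    then show ?thesis
      unfolding integrand_def using psi_pos[of u] that t K0 by (simp add: mult.assoc mult_mono)
  qed
  moreover have "((\<lambda>u. psi t * K * (sig a u)^2) has_integral
      psi t * K * (((sig a t)^2 - (sig a T)^2) / (2 * a))) {t..T}"
    using sig_square_has_integral[OF a_pos c(3)] by (rule has_integral_mult_right)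
  ultimately have "partial_integral t T \<le> psi t * K * (((sig a t)^2 - (sig a T)^2) / (2 * a))"
    unfolding partial_integral_def using integrand_integrable[OF t]
    by (intro has_integral_le[OF integrable_integral]) auto
  also have "\<dots> \<le> psi t * K * (sig a t)^2 / (2 * a)"
    using psi_pos[OF t] K0 a_pos by (simp add: field_simps)
  finally show ?thesis .
qed

lemma partial_integral_tendsto:
  assumes t: "0 < t"
  shows "(partial_integral t \<longlongrightarrow> tail_integral t) at_top"
proof -
  obtain K where K: "\<forall>u\<ge>t. (Yd u)^2 \<le> K * (sig a u)^2"
    using Yd_square_bound[OF t] by blast
  have mono: "partial_integral t T1 \<le> partial_integral t T2" if "t \<le> T1" "T1 \<le> T2" for T1 T2
    using partial_integral_combine[OF t that] partial_integral_nonneg[of T1 T2] t that by simp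
  have bdd: "bdd_above (partial_integral t ` {t..})"
    using partial_integral_le[OF t order_refl _ K] by (auto simp: bdd_above_def)
  define L where "L = (SUP T\<in>{t..}. partial_integral t T)"
  have "(partial_integral t \<longlongrightarrow> L) at_top"
  proof (rule increasing_tendsto)
    show "\<forall>\<^sub>F T in at_top. partial_integral t T \<le> L"
      unfolding eventually_at_top_linorder L_def using bdd by (auto intro!: exI[of _ t] cSUP_upper)
    show "\<forall>\<^sub>F T in at_top. x < partial_integral t T" if "x < L" for x
    proof -
      obtain T0 where "T0 \<in> {t..}" "x < partial_integral t T0"
        using \<open>x < L\<close> less_cSUP_iff[OF _ bdd] unfolding L_def by auto
      then show ?thesis
        unfolding eventually_at_top_linorder using mono by (auto intro: less_le_trans)
    qed
  qed
  then show ?thesis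
    unfolding tail_integral_def by (metis tendsto_Lim trivial_limit_at_top_linorder)
qed

lemma tail_integral_eq:
  assumes "0 < c" "c \<le> t"
  shows "tail_integral t = tail_integral c - partial_integral c t"
proof -
  have "((\<lambda>T. partial_integral c T - partial_integral c t) \<longlongrightarrow> tail_integral c - partial_integral c t) at_top"
    using partial_integral_tendsto[OF assms(1)] by (intro tendsto_diff tendsto_const)
  moreover have "\<forall>\<^sub>F T in at_top. partial_integral c T - partial_integral c t = partial_integral t T"
    unfolding eventually_at_top_linorder using partial_integral_combine[OF assms]
    by (intro exI[of _ t]) (auto simp: algebra_simps)
  ultimately have "(partial_integral t \<longlongrightarrow> tail_integral c - partial_integral c t) at_top"
    by (rule Lim_transform_eventually)
  moreover have "(partial_integral t \<longlongrightarrow> tail_integral t) at_top"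
    using assms by (intro partial_integral_tendsto) simp
  ultimately show ?thesis
    using tendsto_unique[OF trivial_limit_at_top_linorder] by blast
qed

lemma solution_ode:
  assumes S: "S > 0"
  shows "\<exists>d. (solution has_real_derivative d) (at S) \<and> 6 * d + 4 * Y S * solution S + (Yd S)^2 = 0"
proof -
  define c where "c = S / 2"
  have c: "0 < c" "c < S"
    using S by (auto simp: c_def)
  have "(partial_integral c has_real_derivative integrand S) (at S within {c..S+1})"
    unfolding partial_integral_def[abs_def]
    using c by (intro integral_has_real_derivative integrand_continuous_on) auto
  then have FD: "(partial_integral c has_real_derivative integrand S) (at S)"
    using at_within_Icc_at[of c S "S+1"] c by simp
  have sol: "solution x = (tail_integral c - partial_integral c x) / (6 * psi x)" if "c \<le> x" for x
    unfolding solution_def using tail_integral_eq[OF c(1) that] by simp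
  define D where "D = ((0 - integrand S) * (6 * psi S)
      - (tail_integral c - partial_integral c S) * (6 * (psi S * (2/3 * Y S)))) / ((6 * psi S) * (6 * psi S))"
  have "((\<lambda>x. (tail_integral c - partial_integral c x) / (6 * psi x)) has_real_derivative D) (at S)"
    unfolding D_def using psi_pos[OF S]
    by (intro DERIV_divide DERIV_diff DERIV_const FD DERIV_cmult psi_has_derivative S) simp
  then have "(solution has_real_derivative D) (at S)"
    by (rule has_field_derivative_transform_within_open[where S="{c<..}"]) (use c sol in auto)
  moreover have "6 * D + 4 * Y S * solution S + (Yd S)^2 = 0"
    unfolding D_def sol[OF less_imp_le[OF c(2)]] integrand_def using psi_pos[OF S]
    by (simp add: divide_simps)
  ultimately show ?thesis
    by blast
qed

lemma solution_tendsto_0: "(solution \<longlongrightarrow> 0) at_top"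
proof -
  obtain K where K: "\<forall>u\<ge>1. (Yd u)^2 \<le> K * (sig a u)^2"
    using Yd_square_bound[of 1] by auto
  have bounds: "0 \<le> solution t \<and> solution t \<le> K / (12 * a) * (sig a t)^2" if t: "t \<ge> 1" for t
  proof -
    have "0 \<le> tail_integral t"
      using t partial_integral_nonneg
      by (intro tendsto_lowerbound[OF partial_integral_tendsto]) auto
    moreover have "tail_integral t \<le> psi t * K * (sig a t)^2 / (2 * a)"
      using partial_integral_le[of 1 t _ K] K t
      by (intro tendsto_upperbound[OF partial_integral_tendsto])
         (auto simp: eventually_at_top_linorder intro!: exI[of _ t])
    ultimately show ?thesis
      unfolding solution_def using psi_pos[of t] t a_pos
      by (simp add: divide_simps) (simp add: algebra_simps)
  qed
  have "((\<lambda>t. K / (12 * a) * (sig a t)^2) \<longlongrightarrow> K / (12 * a) * 0^2) at_top"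
    by (intro tendsto_intros sig_tendsto_0 a_pos)
  then have upper: "((\<lambda>t. K / (12 * a) * (sig a t)^2) \<longlongrightarrow> 0) at_top"
    by simp
  show ?thesis
    by (rule tendsto_sandwich[OF _ _ tendsto_const upper])
       (use bounds in \<open>auto simp: eventually_at_top_linorder intro!: exI[of _ 1]\<close>)
qed

end

definition Yt_primitive :: "real \<Rightarrow> real \<Rightarrow> real \<Rightarrow> real" where
  "Yt_primitive a A t = -3 * a * A * t - 9 * ln (1 - sig a t) + 3 * ln (Wfun (sig a t) A)"

lemma Yt_primitive_has_derivative:
  assumes a: "a > 0" and t: "t > 0" and A: "A \<ge> 1"
  shows "(Yt_primitive a A has_real_derivative Yt a A t) (at t)"
proof -
  note s = sig_bounds[OF a t]
  have W: "Wfun (sig a t) A > 0"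
    using Wfun_pos s A by auto
  have "(Yt_primitive a A has_real_derivative -3 * a * A * 1
      - 9 * (1 / (1 - sig a t) * (0 - (- a * sig a t)))
      + 3 * (1 / Wfun (sig a t) A * (dWfun (sig a t) A * (- a * sig a t)))) (at t)"
    unfolding Yt_primitive_def[abs_def] using W s
    by (intro DERIV_add DERIV_diff DERIV_cmult DERIV_ident DERIV_const
          DERIV_chain2[OF DERIV_ln_divide] DERIV_chain2[OF Wfun_has_derivative sig_has_derivative]
          sig_has_derivative) auto
  moreover have "-3 * a * A * 1 - 9 * (1 / (1 - sig a t) * (0 - (- a * sig a t)))
      + 3 * (1 / Wfun (sig a t) A * (dWfun (sig a t) A * (- a * sig a t))) = Yt a A t"
    unfolding Yt_def ysig_def using W s by (simp add: divide_simps) algebra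
  ultimately show ?thesis
    by simp
qed

lemma H_solution_exists:
  assumes a: "a > 0" and A: "A \<ge> 1"
  shows "\<exists>h. H_solution a A h"
proof -
  define psi where "psi t = exp (2/3 * Yt_primitive a A t)" for t
  interpret decaying_linear_ode a "Yt a A" "Yt' a A" psi
  proof
    show "(psi has_real_derivative psi t * (2/3 * Yt a A t)) (at t)" if "t > 0" for t
      unfolding psi_def[abs_def]
      by (rule DERIV_chain2[OF DERIV_exp DERIV_cmult[OF Yt_primitive_has_derivative[OF a that A]]])
    show "psi u \<le> psi t" if "0 < t" "t \<le> u" for t u
    proof -
      have "Yt_primitive a A u \<le> Yt_primitive a A t"
      proof (rule DERIV_nonpos_imp_nonincreasing[OF that(2)])
        fix x
        assume "t \<le> x" "x \<le> u"
        then have "x > 0"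
          using that by simp
        moreover have "Yt a A x \<le> 0"
          using Yt_le[OF a _ A, of x] a \<open>x > 0\<close> by linarith
        ultimately show "\<exists>y. (Yt_primitive a A has_real_derivative y) (at x) \<and> y \<le> 0"
          using Yt_primitive_has_derivative[OF a _ A] by blast
      qed
      then show ?thesis
        unfolding psi_def by simp
    qed
    show "isCont (Yt' a A) t" if "t > 0" for t
      by (rule Yt'_isCont[OF a that A])
    show "\<exists>K. \<forall>u\<ge>c. (Yt' a A u)^2 \<le> K * (sig a u)^2" if "c > 0" for c
      by (rule Yt'_square_bound[OF a that A])
  qed (simp_all add: a psi_def)
  show ?thesis
    unfolding H_solution_def using solution_ode solution_tendsto_0 by blast
qed

section \<open>The remainder of the first order expansion in \<open>A\<close>\<close>

definition remainder_forcing :: "real \<Rightarrow> real \<Rightarrow> real" where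
  "remainder_forcing s A = -(s^2 * (ysig' s A + ysig' s 1) * qsig' s A) + 2 * s^2 * ysig' s 1 * qsig' s 1
     - 4 * h0sig s * (qsig s A - qsig s 1) - 4 * (A - 1) * qsig s A * h1sig s"

lemma remainder_forcing_1: "remainder_forcing s 1 = 0"
  unfolding remainder_forcing_def by simp

text \<open>Subtracting the equations for \<open>H\<^sub>0\<close> and \<open>H\<^sub>1\<close> from the one for \<open>H\<^sub>A\<close>, written in terms of
  \<open>Y\<^sub>A = Y\<^sub>1 + a (A - 1) q\<close> and \<open>y'\<^sub>A = y'\<^sub>1 + (A - 1) q'\<close>.\<close>
lemma remainder_ode_identity:
  fixes A dl hl YA YdA d0 Y1 h0 Yd1 dk k a Q1 x Qs1 QA ysA ys1 QsA g kp :: real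
  assumes A: "A \<noteq> 1"
    and e1: "6 * dl + 4 * YA * hl + YdA^2 = 0"
    and e2: "6 * d0 + 4 * Y1 * h0 + Yd1^2 = 0"
    and e3: "6 * dk + 4 * Y1 * k + 4 * h0 * (a * Q1) + 2 * Yd1 * (-(a^2 * x * Qs1)) = 0"
    and e4: "YA = Y1 + a * (A - 1) * QA"
    and e5: "YdA = -(a^2 * x * ysA)" and e6: "Yd1 = -(a^2 * x * ys1)"
    and e7: "ysA = ys1 + (A - 1) * QsA"
    and e8: "h0 = a^3 * g" and e9: "k = a^3 * kp"
  shows "6 * ((dl - d0) / (A - 1) - dk) + 4 * YA * ((hl - h0) / (A - 1) - k)
      = a^4 * (-(x^2 * (ysA + ys1) * QsA) + 2 * x^2 * ys1 * Qs1 - 4 * g * (QA - Q1) - 4 * (A - 1) * QA * kp)"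
proof -
  have "A - 1 \<noteq> 0"
    using A by simp
  have dl: "dl = -(4 * YA * hl + YdA^2) / 6" and d0: "d0 = -(4 * Y1 * h0 + Yd1^2) / 6"
    and dk: "dk = -(4 * Y1 * k + 4 * h0 * (a * Q1) + 2 * Yd1 * (-(a^2 * x * Qs1))) / 6"
    using e1 e2 e3 by simp_all
  show ?thesis
    unfolding dl d0 dk e4 e5 e6 e7 e8 e9 using \<open>A - 1 \<noteq> 0\<close> by (simp add: divide_simps) algebra
qed

lemma H_remainder_ode:
  assumes a: "a > 0" and t: "t > 0" and A: "A > 1"
    and hA: "6 * dA + 4 * Yt a A t * hA + (Yt' a A t)^2 = 0"
  shows "6 * ((dA - a^3 * (h0sig' (sig a t) * (- a * sig a t))) / (A - 1)
        - a^3 * (h1sig' (sig a t) * (- a * sig a t)))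
      + 4 * Yt a A t * ((hA - H0 a t) / (A - 1) - H1 a t)
    = a^4 * remainder_forcing (sig a t) A"
proof -
  note s = sig_bounds[OF a t]
  have A_ne: "A \<noteq> 1"
    using A by simp
  have Y: "Yt a A t = Yt a 1 t + a * (A - 1) * qsig (sig a t) A"
    unfolding Yt_def ysig_split[OF s less_imp_le[OF A]] by (simp add: algebra_simps)
  have y': "ysig' (sig a t) A = ysig' (sig a t) 1 + (A - 1) * qsig' (sig a t) A"
    by (rule ysig'_split[OF sig_pos s(2) less_imp_le[OF A]])
  have Y': "Yt' a A t = -(a^2 * sig a t * ysig' (sig a t) A)"
    "Yt' a 1 t = -(a^2 * sig a t * ysig' (sig a t) 1)"
    unfolding Yt'_def by simp_all
  have H: "H0 a t = a^3 * h0sig (sig a t)" "H1 a t = a^3 * h1sig (sig a t)"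
    unfolding H0_def H1_def by simp_all
  show ?thesis
    unfolding remainder_forcing_def
    by (rule remainder_ode_identity[OF A_ne hA H0_ode[OF a t] H1_ode[OF a t] Y Y' y' H])
qed

lemma H_remainder_bound:
  assumes a: "a > 0" and S: "S > 0" and A: "A > 1" and hA: "H_solution a A hA"
    and small: "\<And>s. s \<in> {0..sig a S} \<Longrightarrow> \<bar>remainder_forcing s A\<bar> \<le> \<epsilon>"
  shows "\<bar>(hA S - H0 a S) / (A - 1) - H1 a S\<bar> \<le> a^3 * \<epsilon> / 12"
proof -
  obtain dA where dA: "\<And>t. t > 0 \<Longrightarrow> (hA has_real_derivative dA t) (at t)"
    "\<And>t. t > 0 \<Longrightarrow> 6 * dA t + 4 * Yt a A t * hA t + (Yt' a A t)^2 = 0"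
    using H_solution_derivative[OF hA] by blast
  define r where "r t = (hA t - H0 a t) / (A - 1) - H1 a t" for t
  define r' where "r' t = (dA t - a^3 * (h0sig' (sig a t) * (- a * sig a t))) / (A - 1)
      - a^3 * (h1sig' (sig a t) * (- a * sig a t))" for t
  have "\<bar>r S\<bar> \<le> a^4 * \<epsilon> / (4 * (3 * a))"
  proof (rule max_principle[where r=r and r'=r' and Y="Yt a A" and c="3 * a" and M="a^4 * \<epsilon>"
        and f="\<lambda>t. - (a^4 * remainder_forcing (sig a t) A)"])
    show "(r has_real_derivative r' t) (at t)" if "S \<le> t" for t
      unfolding r_def[abs_def] r'_def using that S
      by (intro DERIV_diff DERIV_cdivide H0_has_derivative H1_has_derivative dA a) auto
    show "6 * r' t + 4 * Yt a A t * r t = - (- (a^4 * remainder_forcing (sig a t) A))" if "S \<le> t" for t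
      unfolding r_def r'_def using H_remainder_ode[OF a _ A dA(2)] that S by simp
    show "Yt a A t \<le> - (3 * a)" if "S \<le> t" for t
      using Yt_le[OF a _ less_imp_le[OF A], of t] that S by simp
    show "\<bar>- (a^4 * remainder_forcing (sig a t) A)\<bar> \<le> a^4 * \<epsilon>" if "S \<le> t" for t
    proof -
      have "sig a t \<in> {0..sig a S}"
        using sig_antimono[OF a that] sig_pos[of a t] by auto
      then show ?thesis
        using small by (simp add: abs_mult mult_left_mono)
    qed
    have "(r \<longlongrightarrow> (0 - 0) / (A - 1) - 0) at_top"
      unfolding r_def[abs_def]
      using hA H0_tendsto_0[OF a] H1_tendsto_0[OF a] A unfolding H_solution_def
      by (intro tendsto_intros) auto
    then show "(r \<longlongrightarrow> 0) at_top"
      by simp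
  qed (use a in simp)
  also have "a^4 * \<epsilon> / (4 * (3 * a)) = a^3 * \<epsilon> / 12"
    using a by (simp add: field_simps eval_nat_numeral)
  finally show ?thesis
    unfolding r_def .
qed

lemma continuous_on_Wfun [continuous_intros]:
  "continuous_on X f \<Longrightarrow> continuous_on X g \<Longrightarrow> continuous_on X (\<lambda>x. Wfun (f x) (g x))"
  unfolding Wfun_def by (intro continuous_intros)

lemma continuous_on_dWfun [continuous_intros]:
  "continuous_on X f \<Longrightarrow> continuous_on X g \<Longrightarrow> continuous_on X (\<lambda>x. dWfun (f x) (g x))"
  unfolding dWfun_def by (intro continuous_intros)

lemma continuous_on_ddWfun [continuous_intros]:
  "continuous_on X f \<Longrightarrow> continuous_on X g \<Longrightarrow> continuous_on X (\<lambda>x. ddWfun (f x) (g x))"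
  unfolding ddWfun_def by (intro continuous_intros)

lemma continuous_on_Nfun [continuous_intros]:
  "continuous_on X f \<Longrightarrow> continuous_on X g \<Longrightarrow> continuous_on X (\<lambda>x. Nfun (f x) (g x))"
  unfolding Nfun_def by (intro continuous_intros)

lemma continuous_on_Nfun' [continuous_intros]:
  "continuous_on X f \<Longrightarrow> continuous_on X g \<Longrightarrow> continuous_on X (\<lambda>x. Nfun' (f x) (g x))"
  unfolding Nfun'_def by (intro continuous_intros)

lemma remainder_forcing_continuous_on:
  assumes "s1 < 1"
  shows "continuous_on ({0..s1} \<times> {1..2}) (\<lambda>p. remainder_forcing (fst p) (snd p))"
proof -
  have pos: "Wfun (fst p) (snd p) > 0 \<and> Wfun (fst p) 1 > 0 \<and> 1 - fst p > 0 \<and> 1 + fst p > 0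
      \<and> 1 - (fst p)^2 > 0" if "p \<in> {0..s1} \<times> {1..2}" for p
    using that assms Wfun_pos[of "fst p" "snd p"] Wfun_pos[of "fst p" 1]
      unit_interval_factors_pos[of "fst p"] by auto
  show ?thesis
    unfolding remainder_forcing_def ysig'_def qsig'_def qsig_def h0sig_def h1sig_def
    by (intro continuous_intros ballI; drule pos; elim conjE; simp)
qed

lemma remainder_forcing_uniformly_small:
  assumes "s1 < 1" "\<epsilon> > 0"
  obtains \<delta> where "\<delta> > 0"
    and "\<And>s A. s \<in> {0..s1} \<Longrightarrow> 1 \<le> A \<Longrightarrow> A \<le> 2 \<Longrightarrow> \<bar>A - 1\<bar> < \<delta> \<Longrightarrow>
      \<bar>remainder_forcing s A\<bar> < \<epsilon>"
proof -
  have "uniformly_continuous_on ({0..s1} \<times> {1..2}) (\<lambda>p. remainder_forcing (fst p) (snd p))"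
    by (intro compact_uniformly_continuous remainder_forcing_continuous_on assms(1)
          compact_Times compact_Icc)
  then obtain \<delta> where \<delta>: "\<delta> > 0" and close: "\<And>x x'. x \<in> {0..s1} \<times> {1..2} \<Longrightarrow>
      x' \<in> {0..s1} \<times> {1..2} \<Longrightarrow> dist x' x < \<delta> \<Longrightarrow>
      dist (remainder_forcing (fst x') (snd x')) (remainder_forcing (fst x) (snd x)) < \<epsilon>"
    unfolding uniformly_continuous_on_def using assms(2) by metis
  show ?thesis
  proof (rule that[OF \<delta>])
    fix s A
    assume "s \<in> {0..s1}" "1 \<le> A" "A \<le> 2" "\<bar>A - 1\<bar> < \<delta>"
    then show "\<bar>remainder_forcing s A\<bar> < \<epsilon>"
      using close[of "(s, 1)" "(s, A)"]
      by (simp add: remainder_forcing_1 dist_Pair_Pair dist_real_def)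
  qed
qed

section \<open>The derivative in \<open>\<lambda>\<close>\<close>

lemma Acoef_0: "Acoef a 0 = 1"
  unfolding Acoef_def by simp

lemma Acoef_gt_1:
  assumes "a > 0" "lam > 0"
  shows "Acoef a lam > 1"
proof -
  have "sqrt 1 < sqrt (1 + 3 * lam / a^2)"
    using assms by (intro real_sqrt_less_mono) simp
  then show ?thesis
    unfolding Acoef_def by simp
qed

lemma Acoef_has_derivative_0:
  assumes "a > 0"
  shows "(Acoef a has_real_derivative 3 / (2 * a^2)) (at 0)"
proof -
  have "((\<lambda>l. sqrt (1 + 3 / a^2 * l)) has_real_derivative
      inverse (sqrt (1 + 3 / a^2 * 0)) / 2 * (0 + 3 / a^2 * 1)) (at 0)"
    by (intro DERIV_chain2[OF DERIV_real_sqrt] DERIV_add DERIV_const DERIV_cmult DERIV_ident) simp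
  moreover have "Acoef a = (\<lambda>l. sqrt (1 + 3 / a^2 * l))"
    unfolding Acoef_def[abs_def] by simp
  ultimately show ?thesis
    by simp
qed

lemma Hfun_0:
  assumes "a > 0" "S > 0"
  shows "Hfun S a 0 = H0 a S"
  using Hfun_eq[of a 0 S "H0 a"] H_solution_H0 assms by (simp add: Acoef_0)

lemma Hfun_remainder_bound:
  assumes a: "a > 0" and S: "S > 0" and lam: "lam > 0"
    and small: "\<And>s. s \<in> {0..sig a S} \<Longrightarrow> \<bar>remainder_forcing s (Acoef a lam)\<bar> \<le> \<epsilon>"
  shows "\<bar>(Hfun S a lam - H0 a S) / (Acoef a lam - 1) - H1 a S\<bar> \<le> a^3 * \<epsilon> / 12"
proof -
  obtain h where h: "H_solution a (Acoef a lam) h"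
    using H_solution_exists[OF a Acoef_ge_1[OF a]] lam by force
  show ?thesis
    using H_remainder_bound[OF a S Acoef_gt_1[OF a lam] h small] Hfun_eq[OF a _ S h] lam by simp
qed

lemma Hfun_remainder_tendsto_0:
  assumes a: "a > 0" and S: "S > 0"
  shows "((\<lambda>lam. (Hfun S a lam - H0 a S) / (Acoef a lam - 1) - H1 a S) \<longlongrightarrow> 0) (at 0 within {0..})"
proof (rule tendstoI)
  fix \<epsilon> :: real
  assume "\<epsilon> > 0"
  then have \<epsilon>': "6 * \<epsilon> / a^3 > 0"
    using a by simp
  obtain \<delta> where \<delta>: "\<delta> > 0" and close: "\<And>s A. s \<in> {0..sig a S} \<Longrightarrow> 1 \<le> A \<Longrightarrow> A \<le> 2 \<Longrightarrow>
      \<bar>A - 1\<bar> < \<delta> \<Longrightarrow> \<bar>remainder_forcing s A\<bar> < 6 * \<epsilon> / a^3"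
    using remainder_forcing_uniformly_small[OF sig_bounds(2)[OF a S] \<epsilon>'] by blast
  have "(Acoef a \<longlongrightarrow> 1) (at 0 within {0..})"
    using DERIV_isCont[OF Acoef_has_derivative_0[OF a]] Acoef_0[of a]
    by (metis isCont_def tendsto_within_subset subset_UNIV)
  then have "\<forall>\<^sub>F lam in at 0 within {0..}. dist (Acoef a lam) 1 < min \<delta> 1"
    using \<delta> by (intro tendstoD) auto
  moreover have "\<forall>\<^sub>F lam in at 0 within {0..}. lam > (0::real)"
    unfolding eventually_at_filter by (auto intro: always_eventually)
  ultimately show "\<forall>\<^sub>F lam in at 0 within {0..}.
      dist ((Hfun S a lam - H0 a S) / (Acoef a lam - 1) - H1 a S) 0 < \<epsilon>"
  proof eventually_elim
    case (elim lam)
    have "\<bar>(Hfun S a lam - H0 a S) / (Acoef a lam - 1) - H1 a S\<bar> \<le> a^3 * (6 * \<epsilon> / a^3) / 12"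
      using elim Acoef_gt_1[OF a, of lam] by (intro Hfun_remainder_bound[OF a S] less_imp_le close)
        (auto simp: dist_real_def)
    also have "\<dots> = \<epsilon> / 2"
      using a by simp
    finally show ?case
      using \<open>\<epsilon> > 0\<close> by (simp add: dist_real_def)
  qed
qed

lemma Hfun_has_derivative_0:
  assumes a: "a > 0" and S: "S > 0"
  shows "((\<lambda>lam. Hfun S a lam) has_real_derivative 3 / (2 * a^2) * H1 a S) (at 0 within {0..})"
  unfolding has_field_derivative_iff
proof (rule Lim_transform_eventually)
  have "((\<lambda>lam. (Acoef a lam - Acoef a 0) / (lam - 0)) \<longlongrightarrow> 3 / (2 * a^2)) (at 0 within {0..})"
    using has_field_derivative_at_within[OF Acoef_has_derivative_0[OF a]]
    unfolding has_field_derivative_iff .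
  moreover have "((\<lambda>lam. (Hfun S a lam - H0 a S) / (Acoef a lam - 1)) \<longlongrightarrow> H1 a S) (at 0 within {0..})"
    using tendsto_add[OF Hfun_remainder_tendsto_0[OF a S] tendsto_const[of "H1 a S"]] by simp
  ultimately show "((\<lambda>lam. (Acoef a lam - Acoef a 0) / (lam - 0)
      * ((Hfun S a lam - H0 a S) / (Acoef a lam - 1))) \<longlongrightarrow> 3 / (2 * a^2) * H1 a S) (at 0 within {0..})"
    by (rule tendsto_mult)
  have "(Acoef a lam - Acoef a 0) / (lam - 0) * ((Hfun S a lam - H0 a S) / (Acoef a lam - 1))
      = (Hfun S a lam - Hfun S a 0) / (lam - 0)" if "lam > 0" for lam
    using Acoef_gt_1[OF a that] by (simp add: Acoef_0 Hfun_0[OF a S])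
  then show "\<forall>\<^sub>F lam in at 0 within {0..}. (Acoef a lam - Acoef a 0) / (lam - 0)
      * ((Hfun S a lam - H0 a S) / (Acoef a lam - 1)) = (Hfun S a lam - Hfun S a 0) / (lam - 0)"
    unfolding eventually_at_filter by (auto intro: always_eventually)
qed

theorem mainTheorem5:
  fixes a S :: real
  assumes "a > 0" and "S > 0"
  defines "\<sigma> \<equiv> exp (- a * S)"
  shows "Ffun S a 0 = 2 * a^3 * \<sigma>^2 * (1 + \<sigma>^2) / (1 - \<sigma>^2)^3
    \<and> ((\<lambda>lam. Ffun S a lam) has_real_derivative
           (- a * \<sigma>^2 * (385 - 189 * \<sigma> + 154 * \<sigma>^2 + 54 * \<sigma>^3 - 11 * \<sigma>^4 - 9 * \<sigma>^5)
             / (70 * (1 - \<sigma>) * (1 + \<sigma>)^4))) (at 0 within {0..})"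
proof
  have \<sigma>: "sig a S = \<sigma>" "\<sigma> > 0" "\<sigma> < 1"
    unfolding \<sigma>_def sig_def using assms by simp_all
  show "Ffun S a 0 = 2 * a^3 * \<sigma>^2 * (1 + \<sigma>^2) / (1 - \<sigma>^2)^3"
    unfolding Ffun_def Hfun_0[OF assms(1,2)] H0_def h0sig_def \<sigma> by simp
  have "((\<lambda>lam. Ffun S a lam) has_real_derivative 3 / (2 * a^2) * H1 a S / 3) (at 0 within {0..})"
    unfolding Ffun_def[abs_def] by (intro DERIV_cdivide Hfun_has_derivative_0 assms(1,2))
  moreover have "3 / (2 * a^2) * H1 a S / 3
      = - a * \<sigma>^2 * (385 - 189 * \<sigma> + 154 * \<sigma>^2 + 54 * \<sigma>^3 - 11 * \<sigma>^4 - 9 * \<sigma>^5)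
          / (70 * (1 - \<sigma>) * (1 + \<sigma>)^4)"
    unfolding H1_def h1sig_def \<sigma>(1) using assms(1) \<sigma>(2,3) by (simp add: divide_simps) algebra
  ultimately show "((\<lambda>lam. Ffun S a lam) has_real_derivative
      (- a * \<sigma>^2 * (385 - 189 * \<sigma> + 154 * \<sigma>^2 + 54 * \<sigma>^3 - 11 * \<sigma>^4 - 9 * \<sigma>^5)
        / (70 * (1 - \<sigma>) * (1 + \<sigma>)^4))) (at 0 within {0..})"
    by simp
qed

end
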